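(* Let $P=\{p_1,\ldots,p_\aleph\}\subset\mathbb{R}^3$ be a finite point set with a connected neighborhood graph (neighborhoods $\mathcal{N}(i)\subset P$), unit normals $n_j$ and weights $\omega_j\geq 0$. Consider the modified variational shape approximation procedure: starting from some partition $P=\dot{\bigcup}_{i=1}^m P_i$ with unit proxy normals $N_i$, repeatedly apply a proxy update step followed by a switch step, stopping when no switch can be performed. Then this procedure terminates after finitely many iterations.
   Context: The error is $E=\sum_{i=1}^m\sum_{p_j\in P_i}\omega_j\|n_j-N_i\|_2^2$. Proxy update step: with the partition fixed, set $N_i=\frac{\sum_{p_j\in P_i}\omega_j n_j}{\left\|\sum_{p_j\in P_i}\omega_j n_j\right\|_2}$ (denominators assumed nonzero). Switch step: with the proxy normals fixed, among all pairs consisting of a point $p_i\in P_\ell$ and a neighbor $p_j\in\mathcal{N}(i)$ with $p_j\in P_h$, $h\neq\ell$, consider reassigning $p_i$ from $P_\ell$ to $P_h$; perform the reassignment that reduces $E$ maximally, provided it strictly reduces $E$. A switch "can be performed" if some such reassignment strictly reduces $E$. *)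

theory Defs
  imports "HOL-Analysis.Analysis"
begin

type_synonym pt = "real ^ 3"

text \<open>A partition of the finite point set P into parts P_0,...,P_(m-1) is encoded by a
label function a : P -> {0..<m}; P_i = {p in P. a p = i}.\<close>

definition part :: "pt set \<Rightarrow> (pt \<Rightarrow> nat) \<Rightarrow> nat \<Rightarrow> pt set" where
  "part P a i = {p \<in> P. a p = i}"

text \<open>Error E = sum_i sum_(p_j in P_i) w_j |n_j - N_i|^2.\<close>
definition vsa_error ::
  "pt set \<Rightarrow> (pt \<Rightarrow> pt) \<Rightarrow> (pt \<Rightarrow> real) \<Rightarrow> (pt \<Rightarrow> nat) \<Rightarrow> (nat \<Rightarrow> pt) \<Rightarrow> real" where
  "vsa_error P n w a N = (\<Sum>p\<in>P. w p * (norm (n p - N (a p)))\<^sup>2)"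

definition weighted_sum :: "pt set \<Rightarrow> (pt \<Rightarrow> pt) \<Rightarrow> (pt \<Rightarrow> real) \<Rightarrow> (pt \<Rightarrow> nat) \<Rightarrow> nat \<Rightarrow> pt" where
  "weighted_sum P n w a i = (\<Sum>p\<in>part P a i. w p *\<^sub>R n p)"

definition proxy_update :: "pt set \<Rightarrow> (pt \<Rightarrow> pt) \<Rightarrow> (pt \<Rightarrow> real) \<Rightarrow> (pt \<Rightarrow> nat) \<Rightarrow> nat \<Rightarrow> pt" where
  "proxy_update P n w a i = (1 / norm (weighted_sum P n w a i)) *\<^sub>R weighted_sum P n w a i"

definition proxy_defined :: "pt set \<Rightarrow> (pt \<Rightarrow> pt) \<Rightarrow> (pt \<Rightarrow> real) \<Rightarrow> nat \<Rightarrow> (pt \<Rightarrow> nat) \<Rightarrow> bool" where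
  "proxy_defined P n w m a = (\<forall>i<m. weighted_sum P n w a i \<noteq> 0)"

definition candidate :: "pt set \<Rightarrow> (pt \<Rightarrow> pt set) \<Rightarrow> (pt \<Rightarrow> nat) \<Rightarrow> (pt \<Rightarrow> nat) \<Rightarrow> bool" where
  "candidate P Nb a a' = (\<exists>pi\<in>P. \<exists>pj\<in>Nb pi. a pj \<noteq> a pi \<and> a' = a(pi := a pj))"

definition switch_step ::
  "pt set \<Rightarrow> (pt \<Rightarrow> pt set) \<Rightarrow> (pt \<Rightarrow> pt) \<Rightarrow> (pt \<Rightarrow> real) \<Rightarrow> (nat \<Rightarrow> pt)
     \<Rightarrow> (pt \<Rightarrow> nat) \<Rightarrow> (pt \<Rightarrow> nat) \<Rightarrow> bool" where
  "switch_step P Nb n w N a a' =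
     (candidate P Nb a a' \<and> vsa_error P n w a' N < vsa_error P n w a N \<and>
      (\<forall>b. candidate P Nb a b \<longrightarrow> vsa_error P n w a' N \<le> vsa_error P n w b N))"

definition vsa_iter ::
  "pt set \<Rightarrow> (pt \<Rightarrow> pt set) \<Rightarrow> (pt \<Rightarrow> pt) \<Rightarrow> (pt \<Rightarrow> real) \<Rightarrow> nat
     \<Rightarrow> (pt \<Rightarrow> nat) \<Rightarrow> (pt \<Rightarrow> nat) \<Rightarrow> bool" where
  "vsa_iter P Nb n w m a a' =
     (proxy_defined P n w m a \<and> switch_step P Nb n w (proxy_update P n w a) a a')"

definition nbh_connected :: "pt set \<Rightarrow> (pt \<Rightarrow> pt set) \<Rightarrow> bool" where
  "nbh_connected P Nb =
     (\<forall>p\<in>P. \<forall>q\<in>P. (p, q) \<in> ({(x, y). x \<in> P \<and> y \<in> Nb x} \<union> {(x, y). x \<in> P \<and> y \<in> Nb x}\<inverse>)\<^sup>*)"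

end

theory Submission
  imports Defs
begin

text \<open>For unit vectors \<open>\<parallel>n - N\<parallel>\<^sup>2 = 2 - 2 n \<bullet> N\<close>, so for a fixed partition the error is an affine
  function of \<open>\<Sum>\<^sub>i S\<^sub>i \<bullet> N\<^sub>i\<close>, where \<open>S\<^sub>i\<close> is the weighted normal sum of the part \<open>P\<^sub>i\<close>; by
  Cauchy-Schwarz the proxy update \<open>N\<^sub>i = S\<^sub>i / \<parallel>S\<^sub>i\<parallel>\<close> minimises it among unit proxies. Hence the
  error after each proxy update is a Lyapunov function: the switch step strictly lowers the
  error for the current proxies, and the next proxy update can only lower it further. A switch
  only copies labels already present and never changes labels outside \<open>P\<close>, so the run stays in
  a finite set of labellings and cannot go on forever.\<close>

lemma norm_diff_sq_unit:
  fixes x y :: "'a::real_inner"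
  assumes "norm x = 1" "norm y = 1"
  shows "(norm (x - y))\<^sup>2 = 2 - 2 * (x \<bullet> y)"
  using dot_norm_neg[of x y] assms by simp

lemma vsa_error_unit_eq:
  assumes "finite P" "\<forall>p\<in>P. norm (n p) = 1" "\<forall>p\<in>P. norm (N (a p)) = 1"
  shows "vsa_error P n w a N = 2 * (\<Sum>p\<in>P. w p) - 2 * (\<Sum>p\<in>P. w p * (n p \<bullet> N (a p)))"
proof -
  have "vsa_error P n w a N = (\<Sum>p\<in>P. 2 * w p - 2 * (w p * (n p \<bullet> N (a p))))"
    unfolding vsa_error_def
    by (rule sum.cong) (use assms in \<open>auto simp: norm_diff_sq_unit algebra_simps\<close>)
  then show ?thesis
    by (simp add: sum_subtractf sum_distrib_left)
qed

lemma sum_inner_eq_sum_weighted_sum: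
  assumes "finite P" "a ` P \<subseteq> {..<m}"
  shows "(\<Sum>p\<in>P. w p * (n p \<bullet> N (a p))) = (\<Sum>i<m. weighted_sum P n w a i \<bullet> N i)"
proof -
  have "(\<Sum>p\<in>P. w p * (n p \<bullet> N (a p))) = (\<Sum>i<m. \<Sum>p\<in>part P a i. w p * (n p \<bullet> N (a p)))"
    unfolding part_def by (rule sum.group[symmetric]) (use assms in auto)
  also have "\<dots> = (\<Sum>i<m. weighted_sum P n w a i \<bullet> N i)"
    unfolding weighted_sum_def
    by (intro sum.cong) (auto simp: part_def inner_sum_left)
  finally show ?thesis .
qed

lemma vsa_error_eq_weighted_sums:
  assumes "finite P" "\<forall>p\<in>P. norm (n p) = 1" "a ` P \<subseteq> {..<m}" "\<forall>i<m. norm (N i) = 1"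
  shows "vsa_error P n w a N = 2 * (\<Sum>p\<in>P. w p) - 2 * (\<Sum>i<m. weighted_sum P n w a i \<bullet> N i)"
  using vsa_error_unit_eq[of P n N a w] sum_inner_eq_sum_weighted_sum[of P a m w n N] assms
  by auto

lemma norm_proxy_update:
  assumes "proxy_defined P n w m a" "i < m"
  shows "norm (proxy_update P n w a i) = 1"
  using assms unfolding proxy_defined_def proxy_update_def by simp

lemma vsa_error_proxy_update_le:
  assumes "finite P" "\<forall>p\<in>P. norm (n p) = 1" "a ` P \<subseteq> {..<m}"
    and "proxy_defined P n w m a" "\<forall>i<m. norm (N i) = 1"
  shows "vsa_error P n w a (proxy_update P n w a) \<le> vsa_error P n w a N"
proof -
  let ?S = "weighted_sum P n w a" and ?Q = "proxy_update P n w a"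
  have "?S i \<bullet> N i \<le> ?S i \<bullet> ?Q i" if "i < m" for i
  proof -
    have "?S i \<bullet> N i \<le> norm (?S i)"
      using norm_cauchy_schwarz[of "?S i" "N i"] assms(5) that by simp
    also have "\<dots> = ?S i \<bullet> ?Q i"
      unfolding proxy_update_def
      by (simp add: power2_norm_eq_inner[symmetric] power2_eq_square divide_simps)
    finally show ?thesis .
  qed
  then have "(\<Sum>i<m. ?S i \<bullet> N i) \<le> (\<Sum>i<m. ?S i \<bullet> ?Q i)"
    by (intro sum_mono) simp
  then show ?thesis
    using vsa_error_eq_weighted_sums[of P n a m N w] vsa_error_eq_weighted_sums[of P n a m ?Q w]
      assms norm_proxy_update[OF assms(4)]
    by simp
qed

lemma vsa_iter_error_decreases:
  assumes "finite P" "\<forall>p\<in>P. norm (n p) = 1" "a' ` P \<subseteq> {..<m}"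
    and "vsa_iter P Nb n w m a a'" "proxy_defined P n w m a'"
  shows "vsa_error P n w a' (proxy_update P n w a') < vsa_error P n w a (proxy_update P n w a)"
proof -
  have "proxy_defined P n w m a"
    using assms(4) unfolding vsa_iter_def by simp
  then have "vsa_error P n w a' (proxy_update P n w a')
      \<le> vsa_error P n w a' (proxy_update P n w a)"
    by (intro vsa_error_proxy_update_le) (use assms norm_proxy_update in auto)
  also have "\<dots> < vsa_error P n w a (proxy_update P n w a)"
    using assms(4) unfolding vsa_iter_def switch_step_def by simp
  finally show ?thesis .
qed

lemma candidate_labels:
  assumes "candidate P Nb a a'" "\<forall>p\<in>P. Nb p \<subseteq> P"
  shows "a' ` P \<subseteq> a ` P" and "\<forall>x. x \<notin> P \<longrightarrow> a' x = a x"
  using assms unfolding candidate_def by fastforce+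

lemma finite_funs_agreeing_outside:
  assumes "finite A" "finite B"
  shows "finite {f. f ` A \<subseteq> B \<and> (\<forall>x. x \<notin> A \<longrightarrow> f x = g x)}"
proof (rule finite_subset)
  show "{f. f ` A \<subseteq> B \<and> (\<forall>x. x \<notin> A \<longrightarrow> f x = g x)} \<subseteq> (\<lambda>h. override_on g h A) ` (A \<rightarrow>\<^sub>E B)"
  proof
    fix f assume f: "f \<in> {f. f ` A \<subseteq> B \<and> (\<forall>x. x \<notin> A \<longrightarrow> f x = g x)}"
    then have "f = override_on g (restrict f A) A"
      by (auto simp: override_on_def)
    moreover have "restrict f A \<in> A \<rightarrow>\<^sub>E B"
      using f by auto
    ultimately show "f \<in> (\<lambda>h. override_on g h A) ` (A \<rightarrow>\<^sub>E B)" by blast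
  qed
  show "finite ((\<lambda>h. override_on g h A) ` (A \<rightarrow>\<^sub>E B))"
    using assms by (simp add: finite_PiE)
qed

lemma no_descending_chain_in_finite_set:
  fixes f :: "'a \<Rightarrow> 'b::linorder"
  assumes "finite S" "\<And>k. s k \<in> S" "\<And>k. f (s (Suc k)) < f (s k)"
  shows False
proof -
  have "f (s j) < f (s i)" if "i < j" for i j
  proof -
    have "f (s j) \<le> f (s (Suc i))"
      using lift_Suc_antimono_le[of "f \<circ> s" "Suc i" j] assms(3) that by (simp add: less_imp_le)
    also have "\<dots> < f (s i)" by (rule assms(3))
    finally show ?thesis .
  qed
  then have "inj s"
    by (metis less_irrefl linorder_injI)
  then have "infinite (range s)"
    by (rule range_inj_infinite)
  with assms(1,2) show False
    by (meson finite_subset image_subsetI)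
qed

theorem mainTheorem2:
  fixes P :: "pt set" and Nb :: "pt \<Rightarrow> pt set" and n :: "pt \<Rightarrow> pt"
    and w :: "pt \<Rightarrow> real" and m :: nat and a0 :: "pt \<Rightarrow> nat" and N0 :: "nat \<Rightarrow> pt"
  assumes "finite P"
    and "\<forall>p\<in>P. Nb p \<subseteq> P"
    and "nbh_connected P Nb"
    and "\<forall>p\<in>P. norm (n p) = 1"
    and "\<forall>p\<in>P. w p \<ge> 0"
    and "\<forall>p\<in>P. a0 p < m"
    and "\<forall>i<m. norm (N0 i) = 1"
  shows "\<not> (\<exists>s :: nat \<Rightarrow> pt \<Rightarrow> nat. s 0 = a0 \<and> (\<forall>k. vsa_iter P Nb n w m (s k) (s (Suc k))))"
proof
  assume "\<exists>s :: nat \<Rightarrow> pt \<Rightarrow> nat. s 0 = a0 \<and> (\<forall>k. vsa_iter P Nb n w m (s k) (s (Suc k)))"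
  then obtain s where s0: "s 0 = a0" and step: "\<And>k. vsa_iter P Nb n w m (s k) (s (Suc k))"
    by blast
  define S where "S = {f. f ` P \<subseteq> {..<m} \<and> (\<forall>x. x \<notin> P \<longrightarrow> f x = a0 x)}"
  have s_in_S: "s k \<in> S" for k
  proof (induction k)
    case 0
    then show ?case using s0 assms(6) unfolding S_def by auto
  next
    case (Suc k)
    then show ?case
      using candidate_labels[OF _ assms(2), of "s k" "s (Suc k)"] step[of k]
      unfolding S_def vsa_iter_def switch_step_def by auto
  qed
  show False
  proof (rule no_descending_chain_in_finite_set)
    show "finite S"
      unfolding S_def using assms(1) by (intro finite_funs_agreeing_outside) auto
    show "s k \<in> S" for k by (rule s_in_S)
    show "vsa_error P n w (s (Suc k)) (proxy_update P n w (s (Suc k)))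
        < vsa_error P n w (s k) (proxy_update P n w (s k))" for k
      using s_in_S[of "Suc k"] step[of k] step[of "Suc k"]
      by (intro vsa_iter_error_decreases[OF assms(1,4)]) (auto simp: S_def vsa_iter_def)
  qed
qed

end
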